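(* Let $f\ge0$ be integrable on $[-\pi,\pi]$ with $\int_{-\pi}^{\pi} f>0$, and suppose the sequence $\{\sigma_n^2(f)\}_{n\in\mathbb{N}}$ is weakly varying, i.e. $\lim_{n\to\infty}\sigma_{n+1}^2(f)/\sigma_n^2(f)=1$. Let $g$ be a function of the form $$g(\lambda)=h(\lambda)\,|\lambda-\lambda_1|^{\alpha(1)}\cdots|\lambda-\lambda_r|^{\alpha(r)},$$ where $r\in\mathbb{N}$, $\lambda_1,\dots,\lambda_r\in[-\pi,\pi]$, $\alpha(1),\dots,\alpha(r)\ge0$, and $h$ is a measurable function on $[-\pi,\pi]$ which is bounded, continuous at $\lambda=0$, and has a positive lower bound. Then $$\lim_{n\to\infty}\frac{\sigma_n^2(fg)}{\sigma_n^2(f)}=g(0).$$ Moreover, if $g(0)>0$, then $$\lim_{n\to\infty}\frac{\sigma_n^2(fg)}{\mathrm{Var}_{fg}(\widehat m_f)}=1,\qquad\text{where }\ \mathrm{Var}_{fg}(\widehat m_f):=\int_{-\pi}^{\pi}|p_n(e^{i\lambda})|^2f(\lambda)g(\lambda)\,d\lambda .$$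
   Context: For a nonnegative integrable weight $w$ on $[-\pi,\pi]$ with $\int w>0$, $\sigma_n^2(w)=\min_{q\in\mathcal{Q}_n(1)}\int_{-\pi}^{\pi}|q(e^{i\lambda})|^2w(\lambda)\,d\lambda$, where $\mathcal{Q}_n(1)$ is the set of complex polynomials of degree at most $n$ with $q(1)=1$; this is the variance of the BLUE of the mean $m$ of $X(t)=m+Y(t)$ based on $X(0),\dots,X(n)$ when $Y$ has spectral density $w$. The minimizer $p_n=p_n(\cdot,f)\in\mathcal{Q}_n(1)$ for the weight $f$ is unique (the optimal polynomial); its coefficients are those of the BLUE $\widehat m_f$ computed under spectral density $f$, and $\mathrm{Var}_{fg}(\widehat m_f)$ is the variance of this estimator when the true spectral density is $fg$. *)

theory Defs
  imports "HOL-Analysis.Analysis" "HOL-Computational_Algebra.Polynomial"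
begin

definition qform :: "complex poly \<Rightarrow> (real \<Rightarrow> real) \<Rightarrow> real" where
  "qform q w = (LINT t:{-pi..pi}|lborel. (cmod (poly q (cis t)))^2 * w t)"

definition Qn1 :: "nat \<Rightarrow> complex poly set" where
  "Qn1 n = {q. degree q \<le> n \<and> poly q 1 = 1}"

definition sigma2 :: "(real \<Rightarrow> real) \<Rightarrow> nat \<Rightarrow> real" where
  "sigma2 w n = Inf ((\<lambda>q. qform q w) ` Qn1 n)"

definition optpoly :: "(real \<Rightarrow> real) \<Rightarrow> nat \<Rightarrow> complex poly" where
  "optpoly w n = (THE q. q \<in> Qn1 n \<and> qform q w = sigma2 w n)"

(* |x|^a with the convention 0^0 = 1 *)
definition rpow :: "real \<Rightarrow> real \<Rightarrow> real" where
  "rpow x a = (if a = 0 then 1 else x powr a)"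

end

(* Write p_n for the optimal polynomial of f (it exists by compactness of the unit sphere of
   coefficient vectors and is unique by the parallelogram law) and bump(z) = (1 + z)/2, so that
   |bump(e^it)|^2 = (1 + cos t)/2 equals 1 at t = 0 and is smaller elsewhere.

   Since p_n * bump has degree n + 1,
     int |p_n|^2 f (1 - cos t)/2 = sigma_n^2(f) - int |p_n bump|^2 f <= sigma_n^2(f) - sigma_(n+1)^2(f),
   which is o(sigma_n^2(f)) by weak variation. Hence the mass of |p_n|^2 f away from t = 0 is
   negligible, and as g is close to g(0) near 0, eventually
     sigma_n^2(fg) <= Var_fg(m_f) = int |p_n|^2 f g <= (g(0) + e) sigma_n^2(f).

   A polynomial u with u(1) = 1 and zeros of high enough order at the
   points e^(i lambda_j) satisfies |u|^2 <= C g on the circle. For a < g(0) and m large,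
   s = u * bump^m satisfies a |s|^2 <= g, so for every q in Q_n(1) the product q s lies in
   Q_(n+L)(1) and a sigma_(n+L)^2(f) <= a int |q s|^2 f <= int |q|^2 f g. Since
   sigma_(n+L)^2(f) / sigma_n^2(f) -> 1, eventually sigma_n^2(fg) >= (a - e) sigma_n^2(f). *)

theory Submission
  imports Defs
begin

lemma set_borel_measurable_cong:
  fixes f g :: "'a \<Rightarrow> 'b::real_normed_vector"
  assumes "\<And>x. x \<in> A \<Longrightarrow> f x = g x"
  shows "set_borel_measurable M A f \<longleftrightarrow> set_borel_measurable M A g"
proof -
  have "(\<lambda>x. indicator A x *\<^sub>R f x) = (\<lambda>x. indicator A x *\<^sub>R g x)"
    using assms by (intro ext) (auto simp: indicator_def)
  then show ?thesis
    unfolding set_borel_measurable_def by simp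
qed

lemma set_borel_measurable_mult:
  fixes f g :: "'a \<Rightarrow> real"
  assumes "set_borel_measurable M A f" "set_borel_measurable M A g"
  shows "set_borel_measurable M A (\<lambda>x. f x * g x)"
proof -
  have "(\<lambda>x. (indicator A x *\<^sub>R f x) * (indicator A x *\<^sub>R g x)) \<in> borel_measurable M"
    using assms unfolding set_borel_measurable_def by (rule borel_measurable_times)
  also have "(\<lambda>x. (indicator A x *\<^sub>R f x) * (indicator A x *\<^sub>R g x)) = (\<lambda>x. indicator A x *\<^sub>R (f x * g x))"
    by (auto simp: indicator_def)
  finally show ?thesis unfolding set_borel_measurable_def .
qed

lemma set_borel_measurable_lborel_continuous_on:
  fixes \<phi> :: "real \<Rightarrow> real"
  shows "A \<in> sets borel \<Longrightarrow> continuous_on A \<phi> \<Longrightarrow> set_borel_measurable lborel A \<phi>"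
  unfolding set_borel_measurable_def measurable_lborel2 by (rule borel_measurable_continuous_on_indicator)

lemma set_integrable_bounded_mult:
  fixes w \<phi> :: "'a \<Rightarrow> real"
  assumes w: "set_integrable M A w" and \<phi>: "set_borel_measurable M A \<phi>"
    and bound: "\<And>x. x \<in> A \<Longrightarrow> \<bar>\<phi> x\<bar> \<le> B"
  shows "set_integrable M A (\<lambda>x. \<phi> x * w x)"
proof (rule set_integrable_bound)
  show "set_integrable M A (\<lambda>x. B * w x)"
    using w by (rule set_integrable_mult_right)
  have "set_borel_measurable M A w"
    using w unfolding set_integrable_def set_borel_measurable_def by (rule borel_measurable_integrable)
  with \<phi> show "set_borel_measurable M A (\<lambda>x. \<phi> x * w x)"
    by (rule set_borel_measurable_mult)
  show "AE x in M. x \<in> A \<longrightarrow> norm (\<phi> x * w x) \<le> norm (B * w x)"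
    using bound by (intro AE_I2) (auto simp: abs_mult intro!: mult_right_mono order.trans[OF bound abs_ge_self])
qed

lemma set_integral_eq_0_of_mult:
  fixes \<phi> w :: "'a \<Rightarrow> real"
  assumes int: "set_integrable M A (\<lambda>x. \<phi> x * w x)"
    and nonneg: "\<And>x. x \<in> A \<Longrightarrow> 0 \<le> \<phi> x" "\<And>x. x \<in> A \<Longrightarrow> 0 \<le> w x"
    and nonzero: "AE x in M. x \<in> A \<longrightarrow> \<phi> x \<noteq> 0"
    and zero: "(LINT x:A|M. \<phi> x * w x) = 0"
  shows "(LINT x:A|M. w x) = 0"
proof -
  have "AE x in M. indicator A x *\<^sub>R (\<phi> x * w x) = 0"
    using int zero nonneg unfolding set_integrable_def set_lebesgue_integral_def
    by (subst (asm) integral_nonneg_eq_0_iff_AE) (auto simp: indicator_def)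
  with nonzero have "AE x in M. indicator A x *\<^sub>R w x = 0"
    by eventually_elim (auto simp: indicator_def)
  then show ?thesis
    unfolding set_lebesgue_integral_def by (rule integral_eq_zero_AE)
qed

lemma isCont_less_near_0:
  fixes \<phi> \<psi> :: "real \<Rightarrow> real"
  assumes "isCont \<phi> 0" "isCont \<psi> 0" "\<phi> 0 < \<psi> 0"
  obtains d where "0 < d" "d \<le> pi" "\<And>t. \<bar>t\<bar> < d \<Longrightarrow> \<phi> t < \<psi> t"
proof -
  have "isCont (\<lambda>t. \<psi> t - \<phi> t) 0"
    using assms by (intro continuous_intros)
  then obtain d where "0 < d" and d: "\<forall>t. dist t 0 < d \<longrightarrow> dist (\<psi> t - \<phi> t) (\<psi> 0 - \<phi> 0) < \<psi> 0 - \<phi> 0"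
    using assms(3) unfolding continuous_at_eps_delta by (metis diff_gt_0_iff_gt)
  have "\<phi> t < \<psi> t" if "\<bar>t\<bar> < min d pi" for t
    using d[rule_format, of t] that by (auto simp: dist_real_def abs_less_iff)
  with \<open>0 < d\<close> show ?thesis
    using that[of "min d pi"] by simp
qed

lemma cos_le_cos_of_abs_ge:
  assumes "t \<in> {-pi..pi}" "0 \<le> d" "d \<le> \<bar>t\<bar>"
  shows "cos t \<le> cos d"
  using cos_monotone_0_pi_le[of d "\<bar>t\<bar>"] assms by auto

lemma cos_less_1: "0 < d \<Longrightarrow> d \<le> pi \<Longrightarrow> cos d < 1"
  using cos_monotone_0_pi[of 0 d] by simp

lemma norm_cis_minus_one_le: "cmod (cis x - 1) \<le> \<bar>x\<bar>"
proof -
  have "(cmod (cis x - 1))^2 = 2 - 2 * cos x"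
    unfolding cmod_power2 using sin_cos_squared_add[of x] by (simp add: power2_eq_square algebra_simps)
  also have "\<dots> = 4 * (sin (x / 2))^2"
    using cos_double_sin[of "x / 2"] by simp
  also have "\<dots> \<le> 4 * (x / 2)^2"
    using power_mono[OF abs_sin_x_le_abs_x[of "x / 2"] abs_ge_zero, of 2] by (simp add: power_divide)
  also have "\<dots> = \<bar>x\<bar>^2"
    by (simp add: power2_eq_square)
  finally show ?thesis
    by (rule power2_le_imp_le) simp
qed

lemma norm_cis_minus_cis_le: "cmod (cis t - cis l) \<le> \<bar>t - l\<bar>"
proof -
  have "cis t - cis l = cis l * (cis (t - l) - 1)"
    by (simp add: right_diff_distrib cis_mult)
  then show ?thesis
    using norm_cis_minus_one_le[of "t - l"] by (simp add: norm_mult)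
qed

lemma cis_eq_1_iff:
  assumes "x \<in> {-pi..pi}"
  shows "cis x = 1 \<longleftrightarrow> x = 0"
proof
  assume "cis x = 1"
  then have "cos \<bar>x\<bar> = cos 0"
    by (metis cis.sel(1) cos_abs_real cos_zero one_complex.sel(1))
  then show "x = 0"
    using assms cos_inj_pi[of "\<bar>x\<bar>" 0] by auto
qed simp

lemma rpow_nonneg: "0 \<le> rpow x a"
  by (simp add: rpow_def)

lemma power_le_powr_mult_rpow:
  assumes "0 \<le> x" "x \<le> X" "0 < X" "0 \<le> a" "a \<le> real k"
  shows "x ^ k \<le> X powr (real k - a) * rpow x a"
proof (cases "x = 0")
  case True
  with assms show ?thesis
    by (cases "k = 0") (auto simp: rpow_def power_0_left)
next
  case False
  with assms have "0 < x"
    by simp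
  then have "x ^ k = x powr (real k - a) * x powr a"
    by (simp add: powr_realpow flip: powr_add)
  also have "\<dots> \<le> X powr (real k - a) * x powr a"
    using assms \<open>0 < x\<close> by (intro mult_right_mono powr_mono2) auto
  finally show ?thesis
    using \<open>0 < x\<close> by (cases "a = 0") (simp_all add: rpow_def)
qed

lemma norm_cis_diff_power_le:
  assumes "\<bar>t - l\<bar> \<le> 2 * pi" "0 \<le> a" "a \<le> real k"
  shows "cmod (cis t - cis l) ^ k \<le> (2 * pi) powr (real k - a) * rpow \<bar>t - l\<bar> a"
proof -
  have "cmod (cis t - cis l) ^ k \<le> \<bar>t - l\<bar> ^ k"
    by (intro power_mono norm_cis_minus_cis_le) simp
  also have "\<dots> \<le> (2 * pi) powr (real k - a) * rpow \<bar>t - l\<bar> a"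
    using assms by (intro power_le_powr_mult_rpow) auto
  finally show ?thesis .
qed

lemma ratio_shift_tendsto:
  fixes s :: "nat \<Rightarrow> real"
  assumes lim: "(\<lambda>n. s (Suc n) / s n) \<longlonglongrightarrow> 1" and nonzero: "\<And>n. s n \<noteq> 0"
  shows "(\<lambda>n. s (n + L) / s n) \<longlonglongrightarrow> 1"
proof (induction L)
  case 0
  then show ?case
    using nonzero by simp
next
  case (Suc L)
  have "(\<lambda>n. s (Suc (n + L)) / s (n + L) * (s (n + L) / s n)) \<longlonglongrightarrow> 1 * 1"
    using LIMSEQ_ignore_initial_segment[OF lim, of L] Suc.IH by (intro tendsto_mult) simp_all
  then show ?case
    using nonzero by simp
qed

section \<open>The quadratic functional\<close>

definition weight :: "(real \<Rightarrow> real) \<Rightarrow> bool" where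
  "weight w \<longleftrightarrow> (\<forall>t\<in>{-pi..pi}. 0 \<le> w t) \<and> set_integrable lborel {-pi..pi} w"

definition circle_norm2 :: "complex poly \<Rightarrow> real \<Rightarrow> real" where
  "circle_norm2 q t = (cmod (poly q (cis t)))^2"

lemma qform_circle_norm2: "qform q w = (LINT t:{-pi..pi}|lborel. circle_norm2 q t * w t)"
  by (simp add: qform_def circle_norm2_def)

lemma circle_norm2_nonneg [simp]: "0 \<le> circle_norm2 q t"
  by (simp add: circle_norm2_def)

lemma circle_norm2_at_0: "circle_norm2 q 0 = (cmod (poly q 1))^2"
  by (simp add: circle_norm2_def)

lemma circle_norm2_mult: "circle_norm2 (p * q) t = circle_norm2 p t * circle_norm2 q t"
  by (simp add: circle_norm2_def norm_mult power_mult_distrib)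

lemma circle_norm2_smult: "circle_norm2 (smult a q) t = (cmod a)^2 * circle_norm2 q t"
  by (simp add: circle_norm2_def norm_mult power_mult_distrib)

lemma circle_norm2_power: "circle_norm2 (p ^ m) t = circle_norm2 p t ^ m"
  by (simp add: circle_norm2_def norm_power power_mult[symmetric] mult.commute)

lemma continuous_on_circle_norm2: "continuous_on UNIV (circle_norm2 q)"
  unfolding circle_norm2_def by (intro continuous_intros)

lemma one_in_Qn1: "1 \<in> Qn1 n"
  by (simp add: Qn1_def)

lemma Qn1_mult: "p \<in> Qn1 n \<Longrightarrow> q \<in> Qn1 m \<Longrightarrow> p * q \<in> Qn1 (n + m)"
  unfolding Qn1_def by (auto intro: order.trans[OF degree_mult_le] add_mono)

lemma Qn1_power: "p \<in> Qn1 n \<Longrightarrow> p ^ m \<in> Qn1 (n * m)"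
  by (induction m) (auto simp: one_in_Qn1 dest: Qn1_mult)

definition coeff_norm :: "nat \<Rightarrow> complex poly \<Rightarrow> real" where
  "coeff_norm n q = (\<Sum>i\<le>n. cmod (coeff q i))"

lemma coeff_norm_nonneg: "0 \<le> coeff_norm n q"
  by (simp add: coeff_norm_def sum_nonneg)

lemma coeff_norm_add_le: "coeff_norm n (p + q) \<le> coeff_norm n p + coeff_norm n q"
  unfolding coeff_norm_def sum.distrib[symmetric] by (intro sum_mono) (simp add: norm_triangle_ineq)

lemma coeff_norm_minus_commute: "coeff_norm n (p - q) = coeff_norm n (q - p)"
  unfolding coeff_norm_def by (metis coeff_diff norm_minus_commute)

lemma coeff_norm_smult: "coeff_norm n (smult a q) = cmod a * coeff_norm n q"
  by (simp add: coeff_norm_def norm_mult sum_distrib_left)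

lemma norm_poly_le_coeff_norm:
  assumes "degree q \<le> n" "cmod z \<le> 1"
  shows "cmod (poly q z) \<le> coeff_norm n q"
proof -
  have "poly q z = (\<Sum>i\<le>n. coeff q i * z ^ i)"
    unfolding poly_altdef using assms(1) by (intro sum.mono_neutral_left) (auto dest: le_degree)
  also have "cmod \<dots> \<le> (\<Sum>i\<le>n. cmod (coeff q i) * cmod z ^ i)"
    by (rule order.trans[OF norm_sum]) (simp add: norm_mult norm_power)
  also have "\<dots> \<le> coeff_norm n q"
    unfolding coeff_norm_def using assms(2)
    by (intro sum_mono mult_right_le_one_le power_le_one) auto
  finally show ?thesis .
qed

lemma circle_norm2_le_coeff_norm: "degree q \<le> n \<Longrightarrow> circle_norm2 q t \<le> (coeff_norm n q)^2"
  unfolding circle_norm2_def by (intro power_mono norm_poly_le_coeff_norm) auto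

lemma set_integrable_circle_norm2_mult:
  assumes "set_integrable lborel {-pi..pi} w"
  shows "set_integrable lborel {-pi..pi} (\<lambda>t. circle_norm2 q t * w t)"
proof (rule set_integrable_bounded_mult[OF assms])
  show "set_borel_measurable lborel {-pi..pi} (circle_norm2 q)"
    by (intro set_borel_measurable_lborel_continuous_on continuous_on_subset[OF continuous_on_circle_norm2]) auto
  show "\<bar>circle_norm2 q t\<bar> \<le> (coeff_norm (degree q) q)^2" for t
    using circle_norm2_le_coeff_norm[of q "degree q" t] by simp
qed

lemma weight_mult:
  assumes "weight f" "set_borel_measurable lborel {-pi..pi} g"
    and "\<forall>t\<in>{-pi..pi}. 0 \<le> g t \<and> g t \<le> M"
  shows "weight (\<lambda>t. f t * g t)"
  using assms set_integrable_bounded_mult[of lborel "{-pi..pi}" f g M]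
  by (auto simp: weight_def mult.commute)

lemma qform_nonneg: "weight w \<Longrightarrow> 0 \<le> qform q w"
  unfolding qform_circle_norm2 set_lebesgue_integral_def weight_def
  by (intro Bochner_Integration.integral_nonneg) (auto simp: indicator_def)

lemma integral_weight_nonneg: "weight w \<Longrightarrow> 0 \<le> (LINT t:{-pi..pi}|lborel. w t)"
  unfolding set_lebesgue_integral_def weight_def
  by (intro Bochner_Integration.integral_nonneg) (auto simp: indicator_def)

lemma AE_poly_cis_nonzero:
  fixes q :: "complex poly"
  assumes "q \<noteq> 0"
  shows "AE t in lborel. t \<in> {-pi..pi} \<longrightarrow> poly q (cis t) \<noteq> 0"
proof (rule AE_I')
  have "inj_on cis {-pi<..pi}"
    by (rule inj_onI) (metis Arg_cis)
  then have "finite (cis -` {z. poly q z = 0} \<inter> {-pi<..pi})"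
    using poly_roots_finite[OF assms] by (intro finite_vimage_IntI)
  then show "insert (-pi) (cis -` {z. poly q z = 0} \<inter> {-pi<..pi}) \<in> null_sets lborel"
    by (intro finite_imp_null_set_lborel) simp
  show "{t \<in> space lborel. \<not> (t \<in> {-pi..pi} \<longrightarrow> poly q (cis t) \<noteq> 0)}
      \<subseteq> insert (-pi) (cis -` {z. poly q z = 0} \<inter> {-pi<..pi})"
    by auto
qed

lemma qform_pos:
  assumes w: "weight w" and pos: "0 < (LINT t:{-pi..pi}|lborel. w t)" and "q \<noteq> 0"
  shows "0 < qform q w"
proof (rule ccontr)
  assume "\<not> 0 < qform q w"
  then have zero: "(LINT t:{-pi..pi}|lborel. circle_norm2 q t * w t) = 0"
    using qform_nonneg[OF w, of q] by (simp add: qform_circle_norm2)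
  have nonzero: "AE t in lborel. t \<in> {-pi..pi} \<longrightarrow> circle_norm2 q t \<noteq> 0"
    using AE_poly_cis_nonzero[OF \<open>q \<noteq> 0\<close>] by eventually_elim (simp add: circle_norm2_def)
  have wi: "set_integrable lborel {-pi..pi} w" and wn: "\<And>t. t \<in> {-pi..pi} \<Longrightarrow> 0 \<le> w t"
    using w by (auto simp: weight_def)
  have "(LINT t:{-pi..pi}|lborel. w t) = 0"
    by (rule set_integral_eq_0_of_mult[OF set_integrable_circle_norm2_mult[OF wi]
          circle_norm2_nonneg wn nonzero zero])
  with pos show False
    by simp
qed

lemma sigma2_le_qform: "weight w \<Longrightarrow> q \<in> Qn1 n \<Longrightarrow> sigma2 w n \<le> qform q w"
  unfolding sigma2_def by (intro cInf_lower) (auto intro!: bdd_belowI[of _ 0] qform_nonneg)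

lemma sigma2_greatest: "(\<And>q. q \<in> Qn1 n \<Longrightarrow> a \<le> qform q w) \<Longrightarrow> a \<le> sigma2 w n"
  unfolding sigma2_def using one_in_Qn1 by (intro cInf_greatest) auto

lemma sigma2_nonneg: "weight w \<Longrightarrow> 0 \<le> sigma2 w n"
  by (intro sigma2_greatest qform_nonneg)

lemma sigma2_approx:
  assumes "weight w" "0 < e"
  obtains q where "q \<in> Qn1 n" "qform q w < sigma2 w n + e"
proof -
  have "Inf ((\<lambda>q. qform q w) ` Qn1 n) < sigma2 w n + e"
    using assms unfolding sigma2_def by simp
  then show ?thesis
    using that assms qform_nonneg one_in_Qn1[of n]
    by (subst (asm) cInf_less_iff) (auto intro!: bdd_belowI[of _ 0])
qed

section \<open>Existence and uniqueness of the optimal polynomial\<close>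

lemma coeff_convergent_subseq:
  fixes Q :: "nat \<Rightarrow> complex poly"
  assumes deg: "\<And>m. degree (Q m) \<le> n" and bound: "\<And>m. coeff_norm n (Q m) \<le> B"
  obtains r q where "strict_mono r" "degree q \<le> n" "(\<lambda>m. coeff_norm n (Q (r m) - q)) \<longlonglongrightarrow> 0"
proof -
  have "\<forall>d\<subseteq>{..n}. \<exists>l::nat \<Rightarrow> complex. \<exists>r::nat \<Rightarrow> nat. strict_mono r \<and>
      (\<forall>e>0. eventually (\<lambda>m. \<forall>i\<in>d. dist (coeff (Q (r m)) i) (l i) < e) sequentially)"
  proof (rule compact_lemma_general[where unproj = "\<lambda>x. x" and f = "\<lambda>m. coeff (Q m)"])
    fix k assume "k \<in> {..n}"
    then have "cmod (coeff (Q m) k) \<le> B" for m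
      using bound[of m] member_le_sum[of k "{..n}" "\<lambda>i. cmod (coeff (Q m) i)"]
      by (simp add: coeff_norm_def)
    then show "bounded ((\<lambda>x. x k) ` range (\<lambda>m. coeff (Q m)))"
      unfolding bounded_iff by auto
  qed auto
  then obtain l r where r: "strict_mono r"
    and ev: "\<forall>e>0. eventually (\<lambda>m. \<forall>i\<in>{..n}. dist (coeff (Q (r m)) i) (l i) < e) sequentially"
    by blast
  define q where "q = (\<Sum>k\<le>n. monom (l k) k)"
  have coeff_q: "coeff q k = (if k \<le> n then l k else 0)" for k
    unfolding q_def by (simp add: coeff_sum)
  have "degree q \<le> n"
    by (rule degree_le) (simp add: coeff_q)
  have "(\<lambda>m. coeff (Q (r m)) i) \<longlonglongrightarrow> l i" if "i \<le> n" for i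
    unfolding tendsto_iff
  proof (intro allI impI)
    fix e :: real assume "0 < e"
    with ev show "eventually (\<lambda>m. dist (coeff (Q (r m)) i) (l i) < e) sequentially"
      by (auto elim!: eventually_mono allE[of _ e] simp: that)
  qed
  then have "(\<lambda>m. \<Sum>i\<le>n. dist (coeff (Q (r m)) i) (l i)) \<longlonglongrightarrow> (\<Sum>i\<le>n. dist (l i) (l i))"
    by (intro tendsto_sum tendsto_dist tendsto_const) auto
  moreover have "coeff_norm n (Q (r m) - q) = (\<Sum>i\<le>n. dist (coeff (Q (r m)) i) (l i))" for m
    unfolding coeff_norm_def by (intro sum.cong) (simp_all add: coeff_q dist_norm)
  ultimately show ?thesis
    using that r \<open>degree q \<le> n\<close> by simp
qed

lemma circle_norm2_diff_le:
  assumes "degree p \<le> n" "degree q \<le> n"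
  shows "\<bar>circle_norm2 p t - circle_norm2 q t\<bar>
    \<le> coeff_norm n (p - q) * (coeff_norm n p + coeff_norm n q)"
proof -
  let ?a = "cmod (poly p (cis t))" and ?b = "cmod (poly q (cis t))"
  have "\<bar>?a - ?b\<bar> \<le> cmod (poly (p - q) (cis t))"
    by (simp add: norm_triangle_ineq3)
  also have "\<dots> \<le> coeff_norm n (p - q)"
    using assms by (intro norm_poly_le_coeff_norm degree_diff_le) auto
  finally have diff: "\<bar>?a - ?b\<bar> \<le> coeff_norm n (p - q)" .
  have sum: "?a + ?b \<le> coeff_norm n p + coeff_norm n q"
    using assms by (intro add_mono norm_poly_le_coeff_norm) auto
  have "circle_norm2 p t - circle_norm2 q t = (?a - ?b) * (?a + ?b)"
    by (simp add: circle_norm2_def power2_eq_square algebra_simps)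
  then have "\<bar>circle_norm2 p t - circle_norm2 q t\<bar> = \<bar>?a - ?b\<bar> * (?a + ?b)"
    by (simp add: abs_mult)
  also have "\<dots> \<le> coeff_norm n (p - q) * (coeff_norm n p + coeff_norm n q)"
    by (rule mult_mono[OF diff sum]) (simp_all add: coeff_norm_nonneg)
  finally show ?thesis .
qed

lemma qform_diff_le:
  assumes w: "weight w" and deg: "degree p \<le> n" "degree q \<le> n"
  shows "\<bar>qform p w - qform q w\<bar>
    \<le> coeff_norm n (p - q) * (coeff_norm n p + coeff_norm n q) * (LINT t:{-pi..pi}|lborel. w t)"
proof -
  define K where "K = coeff_norm n (p - q) * (coeff_norm n p + coeff_norm n q)"
  define D where "D t = (circle_norm2 p t - circle_norm2 q t) * w t" for t
  have wi: "set_integrable lborel {-pi..pi} w" and wn: "\<forall>t\<in>{-pi..pi}. 0 \<le> w t"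
    using w by (auto simp: weight_def)
  have D_int: "set_integrable lborel {-pi..pi} D"
    unfolding D_def left_diff_distrib by (intro set_integral_diff(1) set_integrable_circle_norm2_mult wi)
  have "qform p w - qform q w = (LINT t:{-pi..pi}|lborel. D t)"
    unfolding qform_circle_norm2 D_def left_diff_distrib
    by (intro set_integral_diff(2)[symmetric] set_integrable_circle_norm2_mult wi)
  moreover have D_bound: "\<bar>D t\<bar> \<le> K * w t" if "t \<in> {-pi..pi}" for t
  proof -
    have "0 \<le> w t"
      using wn that by auto
    then show ?thesis
      using circle_norm2_diff_le[OF deg, of t] unfolding K_def D_def abs_mult
      by (simp add: mult_right_mono)
  qed
  have "(LINT t:{-pi..pi}|lborel. D t) \<le> (LINT t:{-pi..pi}|lborel. K * w t)"
    by (rule set_integral_mono[OF D_int set_integrable_mult_right[OF wi]])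
      (use D_bound in \<open>auto simp: abs_le_iff\<close>)
  moreover have "(LINT t:{-pi..pi}|lborel. (- K) * w t) \<le> (LINT t:{-pi..pi}|lborel. D t)"
    by (rule set_integral_mono[OF set_integrable_mult_right[OF wi] D_int])
      (use D_bound in \<open>auto simp: abs_le_iff minus_le_iff\<close>)
  then have "- K * (LINT t:{-pi..pi}|lborel. w t) \<le> (LINT t:{-pi..pi}|lborel. D t)"
    by (simp only: set_integral_mult_right)
  ultimately show ?thesis
    unfolding K_def by (simp add: abs_le_iff)
qed

lemma qform_tendsto:
  assumes w: "weight w" and deg: "\<And>m. degree (Q m) \<le> n" "degree q \<le> n"
    and bound: "\<And>m. coeff_norm n (Q m) \<le> B" and lim: "(\<lambda>m. coeff_norm n (Q m - q)) \<longlonglongrightarrow> 0"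
  shows "(\<lambda>m. qform (Q m) w) \<longlonglongrightarrow> qform q w"
proof -
  define I where "I = (LINT t:{-pi..pi}|lborel. w t)"
  have "0 \<le> I"
    unfolding I_def by (rule integral_weight_nonneg[OF w])
  have bound_diff: "norm (qform (Q m) w - qform q w) \<le> coeff_norm n (Q m - q) * (B + coeff_norm n q) * I" for m
  proof -
    have "coeff_norm n (Q m - q) * (coeff_norm n (Q m) + coeff_norm n q) * I
        \<le> coeff_norm n (Q m - q) * (B + coeff_norm n q) * I"
      using bound[of m] \<open>0 \<le> I\<close> coeff_norm_nonneg[of n "Q m - q"]
      by (intro mult_right_mono mult_left_mono) auto
    then show ?thesis
      using qform_diff_le[OF w deg(1) deg(2), of m] unfolding I_def by simp
  qed
  have "(\<lambda>m. coeff_norm n (Q m - q) * (B + coeff_norm n q) * I) \<longlonglongrightarrow> 0"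
    using tendsto_mult_left_zero[OF tendsto_mult_left_zero[OF lim]] .
  then have "(\<lambda>m. qform (Q m) w - qform q w) \<longlonglongrightarrow> 0"
    by (rule Lim_null_comparison[OF always_eventually[OF allI[OF bound_diff]]])
  then show ?thesis
    by (rule LIM_zero_cancel)
qed

lemma qform_not_tendsto_0:
  assumes w: "weight w" and pos: "0 < (LINT t:{-pi..pi}|lborel. w t)"
    and deg: "\<And>m. degree (P m) \<le> n" and norm: "\<And>m. coeff_norm n (P m) = 1"
  shows "\<not> (\<lambda>m. qform (P m) w) \<longlonglongrightarrow> 0"
proof
  assume lim_0: "(\<lambda>m. qform (P m) w) \<longlonglongrightarrow> 0"
  obtain r q where r: "strict_mono r" and "degree q \<le> n"
    and lim: "(\<lambda>m. coeff_norm n (P (r m) - q)) \<longlonglongrightarrow> 0"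
    using coeff_convergent_subseq[of P n 1] deg norm by auto
  have "\<bar>1 - coeff_norm n q\<bar> \<le> coeff_norm n (P (r m) - q)" for m
    using coeff_norm_add_le[of n q "P (r m) - q"] coeff_norm_add_le[of n "P (r m)" "q - P (r m)"]
      coeff_norm_minus_commute[of n q "P (r m)"] norm[of "r m"]
    by auto
  then have "\<bar>1 - coeff_norm n q\<bar> \<le> 0"
    by (intro tendsto_le[OF _ lim tendsto_const]) auto
  then have "q \<noteq> 0"
    by (auto simp: coeff_norm_def)
  have "(\<lambda>m. qform (P (r m)) w) \<longlonglongrightarrow> qform q w"
    using qform_tendsto[OF w _ \<open>degree q \<le> n\<close> _ lim, of 1] deg norm by simp
  moreover have "(\<lambda>m. qform (P (r m)) w) \<longlonglongrightarrow> 0"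
    using LIMSEQ_subseq_LIMSEQ[OF lim_0 r] by (simp add: comp_def)
  ultimately have "qform q w = 0"
    by (rule LIMSEQ_unique)
  with qform_pos[OF w pos \<open>q \<noteq> 0\<close>] show False
    by simp
qed

lemma qform_coercive:
  assumes w: "weight w" and pos: "0 < (LINT t:{-pi..pi}|lborel. w t)"
  shows "\<exists>c>0. \<forall>q. degree q \<le> n \<longrightarrow> c * (coeff_norm n q)^2 \<le> qform q w"
proof (rule ccontr)
  assume contra: "\<not> ?thesis"
  have "\<exists>q. degree q \<le> n \<and> qform q w < (coeff_norm n q)^2 / real (Suc m)" for m
  proof -
    have "0 < 1 / real (Suc m)"
      by simp
    with contra obtain q where "degree q \<le> n" "\<not> 1 / real (Suc m) * (coeff_norm n q)^2 \<le> qform q w"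
      by blast
    then show ?thesis
      by auto
  qed
  then obtain Q where degQ: "\<And>m. degree (Q m) \<le> n"
    and Q: "\<And>m. qform (Q m) w < (coeff_norm n (Q m))^2 / real (Suc m)"
    by metis
  have normQ: "0 < coeff_norm n (Q m)" for m
    using Q[of m] qform_nonneg[OF w, of "Q m"] coeff_norm_nonneg[of n "Q m"]
    by (cases "coeff_norm n (Q m) = 0") auto
  define P where "P m = smult (of_real (1 / coeff_norm n (Q m))) (Q m)" for m
  have qform_P: "qform (P m) w \<le> 1 / real (Suc m)" for m
  proof -
    have "qform (P m) w = qform (Q m) w / (coeff_norm n (Q m))^2"
      by (simp add: P_def qform_circle_norm2 circle_norm2_smult norm_divide power_divide mult.assoc)
    also have "\<dots> \<le> 1 / real (Suc m)"
      using Q[of m] normQ[of m] by (simp add: field_simps)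
    finally show ?thesis .
  qed
  have "(\<lambda>m. 1 / real (Suc m)) \<longlonglongrightarrow> 0"
    using LIMSEQ_inverse_real_of_nat by (simp add: inverse_eq_divide)
  then have "(\<lambda>m. qform (P m) w) \<longlonglongrightarrow> 0"
    by (rule tendsto_sandwich[rotated 2, OF tendsto_const])
      (use qform_P qform_nonneg[OF w] in \<open>auto intro: always_eventually\<close>)
  moreover have "degree (P m) \<le> n" "coeff_norm n (P m) = 1" for m
    using degQ[of m] normQ[of m] by (simp_all add: P_def coeff_norm_smult norm_divide)
  ultimately show False
    using qform_not_tendsto_0[OF w pos] by blast
qed

lemma Qn1_limit:
  assumes "\<And>m. Q m \<in> Qn1 n" "degree q \<le> n" and lim: "(\<lambda>m. coeff_norm n (Q m - q)) \<longlonglongrightarrow> 0"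
  shows "q \<in> Qn1 n"
proof -
  have "cmod (1 - poly q 1) \<le> coeff_norm n (Q m - q)" for m
    using assms(1)[of m] norm_poly_le_coeff_norm[OF degree_diff_le[OF _ assms(2)], of "Q m" 1]
    by (simp add: Qn1_def)
  then have "cmod (1 - poly q 1) \<le> 0"
    by (intro tendsto_le[OF _ lim tendsto_const]) auto
  with assms(2) show ?thesis
    by (simp add: Qn1_def)
qed

lemma sigma2_attained:
  assumes w: "weight w" and pos: "0 < (LINT t:{-pi..pi}|lborel. w t)"
  obtains p where "p \<in> Qn1 n" "qform p w = sigma2 w n"
proof -
  obtain c where "0 < c" and coercive: "\<And>q. degree q \<le> n \<Longrightarrow> c * (coeff_norm n q)^2 \<le> qform q w"
    using qform_coercive[OF w pos, of n] by blast
  have "\<exists>q. q \<in> Qn1 n \<and> qform q w < sigma2 w n + 1 / real (Suc m)" for m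
    using sigma2_approx[OF w, of "1 / real (Suc m)" n] by auto
  then obtain Q where Q: "\<And>m. Q m \<in> Qn1 n" "\<And>m. qform (Q m) w < sigma2 w n + 1 / real (Suc m)"
    by metis
  have degQ: "degree (Q m) \<le> n" for m
    using Q(1) by (simp add: Qn1_def)
  define B where "B = sqrt ((sigma2 w n + 1) / c)"
  have normQ: "coeff_norm n (Q m) \<le> B" for m
  proof -
    have "1 / real (Suc m) \<le> 1"
      by simp
    then have "c * (coeff_norm n (Q m))^2 \<le> sigma2 w n + 1"
      using coercive[OF degQ[of m]] Q(2)[of m] by linarith
    then show ?thesis
      unfolding B_def using \<open>0 < c\<close> by (intro real_le_rsqrt) (simp add: field_simps)
  qed
  obtain r q where r: "strict_mono r" and "degree q \<le> n"
    and lim: "(\<lambda>m. coeff_norm n (Q (r m) - q)) \<longlonglongrightarrow> 0"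
    using coeff_convergent_subseq[of Q n B] degQ normQ by auto
  have "q \<in> Qn1 n"
    using Qn1_limit[of "\<lambda>m. Q (r m)"] Q(1) \<open>degree q \<le> n\<close> lim by blast
  have lim_qform: "(\<lambda>m. qform (Q (r m)) w) \<longlonglongrightarrow> qform q w"
    using qform_tendsto[OF w _ \<open>degree q \<le> n\<close> _ lim, of B] degQ normQ by simp
  have lim_bound: "(\<lambda>m. sigma2 w n + 1 / real (Suc (r m))) \<longlonglongrightarrow> sigma2 w n"
    using tendsto_add[OF tendsto_const LIMSEQ_subseq_LIMSEQ[OF LIMSEQ_inverse_real_of_nat r]]
    by (simp add: comp_def inverse_eq_divide)
  have "qform q w \<le> sigma2 w n"
    using Q(2) less_imp_le
    by (intro tendsto_le[OF sequentially_bot lim_bound lim_qform] always_eventually) blast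
  with sigma2_le_qform[OF w \<open>q \<in> Qn1 n\<close>] that \<open>q \<in> Qn1 n\<close> show ?thesis
    by simp
qed

lemma circle_norm2_parallelogram:
  "circle_norm2 (smult (1/2) (p + q)) t + circle_norm2 (smult (1/2) (p - q)) t
    = (circle_norm2 p t + circle_norm2 q t) / 2"
  unfolding circle_norm2_def cmod_power2
  by (simp add: power2_eq_square field_simps)

lemma qform_parallelogram:
  assumes "set_integrable lborel {-pi..pi} w"
  shows "qform (smult (1/2) (p + q)) w + qform (smult (1/2) (p - q)) w = (qform p w + qform q w) / 2"
proof -
  note int = set_integrable_circle_norm2_mult[OF assms]
  have "qform (smult (1/2) (p + q)) w + qform (smult (1/2) (p - q)) w
      = (LINT t:{-pi..pi}|lborel. (circle_norm2 (smult (1/2) (p + q)) t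
          + circle_norm2 (smult (1/2) (p - q)) t) * w t)"
    unfolding qform_circle_norm2 distrib_right using int by (simp add: set_integral_add)
  also have "\<dots> = (LINT t:{-pi..pi}|lborel. (1/2) * (circle_norm2 p t * w t) + (1/2) * (circle_norm2 q t * w t))"
    unfolding circle_norm2_parallelogram by (simp add: field_simps)
  also have "\<dots> = (qform p w + qform q w) / 2"
    unfolding qform_circle_norm2 using int by (simp add: set_integral_add)
  finally show ?thesis .
qed

lemma sigma2_minimiser_unique:
  assumes w: "weight w" and pos: "0 < (LINT t:{-pi..pi}|lborel. w t)"
    and p: "p \<in> Qn1 n" "qform p w = sigma2 w n"
    and q: "q \<in> Qn1 n" "qform q w = sigma2 w n"
  shows "p = q"
proof (rule ccontr)
  assume "p \<noteq> q"
  then have "0 < qform (smult (1/2) (p - q)) w"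
    by (intro qform_pos[OF w pos]) simp
  moreover have "smult (1/2) (p + q) \<in> Qn1 n"
    using p(1) q(1) by (auto simp: Qn1_def intro: degree_add_le)
  then have "sigma2 w n \<le> qform (smult (1/2) (p + q)) w"
    by (rule sigma2_le_qform[OF w])
  moreover have "qform (smult (1/2) (p + q)) w + qform (smult (1/2) (p - q)) w = sigma2 w n"
    using qform_parallelogram[of w p q] w p(2) q(2) by (simp add: weight_def)
  ultimately show False
    by simp
qed

lemma optpoly_minimiser:
  assumes "weight w" "0 < (LINT t:{-pi..pi}|lborel. w t)"
  shows "optpoly w n \<in> Qn1 n" "qform (optpoly w n) w = sigma2 w n"
proof -
  obtain p where p: "p \<in> Qn1 n" "qform p w = sigma2 w n"
    using sigma2_attained[OF assms] .
  have "optpoly w n \<in> Qn1 n \<and> qform (optpoly w n) w = sigma2 w n"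
    unfolding optpoly_def
    by (rule theI[of _ p]) (use p sigma2_minimiser_unique[OF assms] in blast)+
  then show "optpoly w n \<in> Qn1 n" "qform (optpoly w n) w = sigma2 w n"
    by auto
qed

lemma sigma2_pos:
  assumes "weight w" "0 < (LINT t:{-pi..pi}|lborel. w t)"
  shows "0 < sigma2 w n"
proof -
  have "optpoly w n \<noteq> 0"
    using optpoly_minimiser(1)[OF assms, of n] by (auto simp: Qn1_def)
  then show ?thesis
    using qform_pos[OF assms] optpoly_minimiser(2)[OF assms] by metis
qed

definition bump :: "complex poly" where
  "bump = [:1/2, 1/2:]"

lemma circle_norm2_bump: "circle_norm2 bump t = (1 + cos t) / 2"
proof -
  have "circle_norm2 bump t = ((1 + cos t) / 2)^2 + (sin t / 2)^2"
    by (simp add: circle_norm2_def bump_def cmod_power2 cis.sel add_divide_distrib)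
  also have "\<dots> = (1 + cos t) / 2"
    unfolding sin_squared_eq power_divide by (simp add: power2_eq_square field_simps)
  finally show ?thesis .
qed

lemma circle_norm2_bump_le_1: "circle_norm2 bump t \<le> 1"
  by (simp add: circle_norm2_bump)

lemma bump_in_Qn1: "bump \<in> Qn1 1"
  by (simp add: bump_def Qn1_def)

lemma bump_power_small:
  assumes "0 < d" "d \<le> pi" "0 < e"
  obtains m where "\<And>t. t \<in> {-pi..pi} \<Longrightarrow> d \<le> \<bar>t\<bar> \<Longrightarrow> circle_norm2 bump t ^ m \<le> e"
proof -
  define y where "y = (1 + cos d) / 2"
  have "0 \<le> y"
    using cos_ge_minus_one[of d] unfolding y_def add_divide_distrib by linarith
  moreover have "y < 1"
    using cos_less_1[OF assms(1,2)] by (simp add: y_def)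
  ultimately have "(\<lambda>m. y ^ m) \<longlonglongrightarrow> 0"
    by (intro LIMSEQ_power_zero) auto
  then obtain m where "y ^ m < e"
    using order_tendstoD(2)[OF _ \<open>0 < e\<close>] by (metis eventually_sequentially order.refl)
  have "circle_norm2 bump t ^ m \<le> y ^ m" if "t \<in> {-pi..pi}" "d \<le> \<bar>t\<bar>" for t
    using cos_le_cos_of_abs_ge[OF that(1) _ that(2)] assms
    by (intro power_mono[OF _ circle_norm2_nonneg]) (auto simp: circle_norm2_bump y_def)
  with \<open>y ^ m < e\<close> show ?thesis
    using that by (meson less_imp_le order.trans)
qed

lemma qform_optpoly_le:
  assumes f: "weight f" "0 < (LINT t:{-pi..pi}|lborel. f t)"
    and fg: "set_integrable lborel {-pi..pi} (\<lambda>t. f t * g t)"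
    and "0 \<le> K" and majorant: "\<And>t. t \<in> {-pi..pi} \<Longrightarrow> g t \<le> b + K * (1 - cos t) / 2"
  shows "qform (optpoly f n) (\<lambda>t. f t * g t) \<le> b * sigma2 f n + K * (sigma2 f n - sigma2 f (Suc n))"
proof -
  define p where "p = optpoly f n"
  have fi: "set_integrable lborel {-pi..pi} f" and fn: "\<And>t. t \<in> {-pi..pi} \<Longrightarrow> 0 \<le> f t"
    using f(1) by (auto simp: weight_def)
  note int = set_integrable_circle_norm2_mult[OF fi]
  have "circle_norm2 p t * (f t * g t)
      \<le> b * (circle_norm2 p t * f t) + K * (circle_norm2 p t * f t - circle_norm2 (p * bump) t * f t)"
    if "t \<in> {-pi..pi}" for t
  proof -
    have "circle_norm2 p t * (f t * g t) \<le> circle_norm2 p t * f t * (b + K * (1 - cos t) / 2)"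
      using majorant[OF that] fn[OF that] by (simp add: mult.assoc mult_left_mono)
    also have "\<dots> = b * (circle_norm2 p t * f t)
        + K * (circle_norm2 p t * f t - circle_norm2 (p * bump) t * f t)"
      by (simp add: circle_norm2_mult circle_norm2_bump field_simps)
    finally show ?thesis .
  qed
  then have "qform p (\<lambda>t. f t * g t)
      \<le> (LINT t:{-pi..pi}|lborel. b * (circle_norm2 p t * f t)
          + K * (circle_norm2 p t * f t - circle_norm2 (p * bump) t * f t))"
    unfolding qform_circle_norm2
    by (intro set_integral_mono set_integrable_circle_norm2_mult fg) (use int in auto)
  also have "\<dots> = b * qform p f + K * (qform p f - qform (p * bump) f)"
    unfolding qform_circle_norm2 using int by (simp add: set_integral_add set_integral_diff)
  also have "\<dots> \<le> b * sigma2 f n + K * (sigma2 f n - sigma2 f (Suc n))"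
  proof -
    have "sigma2 f (Suc n) \<le> qform (p * bump) f"
      using sigma2_le_qform[OF f(1) Qn1_mult[OF optpoly_minimiser(1)[OF f] bump_in_Qn1]]
      by (simp add: p_def)
    then show ?thesis
      using optpoly_minimiser(2)[OF f] \<open>0 \<le> K\<close> by (simp add: p_def mult_left_mono)
  qed
  finally show ?thesis
    unfolding p_def .
qed

lemma sigma2_shift_le:
  assumes f: "weight f" and fg: "set_integrable lborel {-pi..pi} (\<lambda>t. f t * g t)"
    and s: "s \<in> Qn1 L" and "0 \<le> a" and minorant: "\<And>t. t \<in> {-pi..pi} \<Longrightarrow> a * circle_norm2 s t \<le> g t"
  shows "a * sigma2 f (n + L) \<le> sigma2 (\<lambda>t. f t * g t) n"
proof (rule sigma2_greatest)
  fix q assume "q \<in> Qn1 n"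
  have fi: "set_integrable lborel {-pi..pi} f" and fn: "\<And>t. t \<in> {-pi..pi} \<Longrightarrow> 0 \<le> f t"
    using f by (auto simp: weight_def)
  have "a * sigma2 f (n + L) \<le> a * qform (q * s) f"
    using sigma2_le_qform[OF f Qn1_mult[OF \<open>q \<in> Qn1 n\<close> s]] \<open>0 \<le> a\<close> by (rule mult_left_mono)
  also have "\<dots> = (LINT t:{-pi..pi}|lborel. circle_norm2 q t * (a * circle_norm2 s t) * f t)"
    unfolding qform_circle_norm2 circle_norm2_mult by (simp add: ac_simps)
  also have "\<dots> \<le> qform q (\<lambda>t. f t * g t)"
    unfolding qform_circle_norm2
  proof (rule set_integral_mono)
    show "set_integrable lborel {-pi..pi} (\<lambda>t. circle_norm2 q t * (a * circle_norm2 s t) * f t)"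
      using set_integrable_circle_norm2_mult[OF fi, of "q * s"]
      by (simp add: circle_norm2_mult ac_simps)
    show "circle_norm2 q t * (a * circle_norm2 s t) * f t \<le> circle_norm2 q t * (f t * g t)"
      if "t \<in> {-pi..pi}" for t
    proof -
      have "a * circle_norm2 s t * (circle_norm2 q t * f t) \<le> g t * (circle_norm2 q t * f t)"
        using minorant[OF that] fn[OF that] by (intro mult_right_mono) auto
      then show ?thesis
        by (simp add: ac_simps)
    qed
  qed (rule set_integrable_circle_norm2_mult[OF fg])
  finally show "a * sigma2 f (n + L) \<le> qform q (\<lambda>t. f t * g t)" .
qed

section \<open>Localisation at zero\<close>

lemma cos_majorant_exists:
  fixes g :: "real \<Rightarrow> real"
  assumes "isCont g 0" "g 0 < b" "\<forall>t\<in>{-pi..pi}. g t \<le> M"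
  obtains K where "0 \<le> K" "\<And>t. t \<in> {-pi..pi} \<Longrightarrow> g t \<le> b + K * (1 - cos t) / 2"
proof -
  obtain d where d: "0 < d" "d \<le> pi" and near: "\<And>t. \<bar>t\<bar> < d \<Longrightarrow> g t < b"
    using isCont_less_near_0[of g "\<lambda>_. b"] assms(1,2) by auto
  have "0 < 1 - cos d"
    using cos_less_1[OF d] by simp
  define K where "K = 2 * max 0 (M - b) / (1 - cos d)"
  have "0 \<le> K"
    using \<open>0 < 1 - cos d\<close> by (simp add: K_def)
  moreover have "g t \<le> b + K * (1 - cos t) / 2" if t: "t \<in> {-pi..pi}" for t
  proof (cases "\<bar>t\<bar> < d")
    case True
    have "0 \<le> K * (1 - cos t) / 2"
      using \<open>0 \<le> K\<close> by simp
    with near[OF True] show ?thesis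
      by linarith
  next
    case False
    then have "K * (1 - cos d) / 2 \<le> K * (1 - cos t) / 2"
      using cos_le_cos_of_abs_ge[OF t] d \<open>0 \<le> K\<close> by (intro divide_right_mono mult_left_mono) auto
    moreover have "K * (1 - cos d) / 2 = max 0 (M - b)"
      using \<open>0 < 1 - cos d\<close> by (simp add: K_def)
    moreover have "g t - b \<le> max 0 (M - b)"
      using bspec[OF assms(3) t] by linarith
    ultimately show ?thesis
      by linarith
  qed
  ultimately show ?thesis
    using that by blast
qed

text \<open>Near \<open>t = 0\<close> the bound holds for \<open>u\<close> itself because \<open>a |u(1)|\<^sup>2 = a < g(0)\<close>; away from \<open>0\<close>
  the factor \<open>|bump|\<^sup>2\<^sup>m\<close> compensates the constant \<open>C\<close>.\<close>

lemma peaking_polynomial: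
  fixes g :: "real \<Rightarrow> real"
  assumes "isCont g 0" "0 < a" "a < g 0"
    and u: "u \<in> Qn1 K" "\<forall>t\<in>{-pi..pi}. circle_norm2 u t \<le> C * g t"
  obtains s L where "s \<in> Qn1 L" "\<And>t. t \<in> {-pi..pi} \<Longrightarrow> a * circle_norm2 s t \<le> g t"
proof -
  have u_0: "circle_norm2 u 0 = 1"
    using u(1) by (simp add: circle_norm2_at_0 Qn1_def)
  then have "1 \<le> C * g 0"
    using bspec[OF u(2), of 0] by simp
  then have "0 < C"
    using \<open>a < g 0\<close> \<open>0 < a\<close> by (smt (verit) mult_nonpos_nonneg)
  have "isCont (\<lambda>t. a * circle_norm2 u t) 0"
    using continuous_on_circle_norm2 by (simp add: continuous_on_eq_continuous_at)
  then obtain d where d: "0 < d" "d \<le> pi" and near: "\<And>t. \<bar>t\<bar> < d \<Longrightarrow> a * circle_norm2 u t < g t"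
    using isCont_less_near_0[of "\<lambda>t. a * circle_norm2 u t" g] assms(1,3) u_0 by auto
  have "0 < 1 / (a * C)"
    using \<open>0 < a\<close> \<open>0 < C\<close> by simp
  with d obtain m where far: "\<And>t. t \<in> {-pi..pi} \<Longrightarrow> d \<le> \<bar>t\<bar> \<Longrightarrow> circle_norm2 bump t ^ m \<le> 1 / (a * C)"
    by (rule bump_power_small) blast
  have bound: "a * (circle_norm2 u t * circle_norm2 bump t ^ m) \<le> g t" if t: "t \<in> {-pi..pi}" for t
  proof (cases "\<bar>t\<bar> < d")
    case True
    have "a * (circle_norm2 u t * circle_norm2 bump t ^ m) \<le> a * circle_norm2 u t"
      using \<open>0 < a\<close> circle_norm2_bump_le_1 by (intro mult_left_mono mult_right_le_one_le power_le_one) auto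
    with near[OF True] show ?thesis
      by linarith
  next
    case False
    have "0 \<le> g t"
      using order.trans[OF circle_norm2_nonneg bspec[OF u(2) t]] \<open>0 < C\<close> by (simp add: zero_le_mult_iff)
    have "a * (circle_norm2 u t * circle_norm2 bump t ^ m) \<le> a * (C * g t * (1 / (a * C)))"
      using bspec[OF u(2) t] far[OF t] False \<open>0 < a\<close> \<open>0 < C\<close> \<open>0 \<le> g t\<close>
      by (intro mult_left_mono mult_mono) auto
    with \<open>0 < a\<close> \<open>0 < C\<close> show ?thesis
      by simp
  qed
  show ?thesis
    by (rule that[OF Qn1_mult[OF u(1) Qn1_power[OF bump_in_Qn1]]])
      (use bound in \<open>simp add: circle_norm2_mult circle_norm2_power\<close>)
qed

lemma eventually_qform_optpoly_ratio_less:
  assumes f: "weight f" "0 < (LINT t:{-pi..pi}|lborel. f t)"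
    and wv: "(\<lambda>n. sigma2 f (Suc n) / sigma2 f n) \<longlonglongrightarrow> 1"
    and fg: "weight (\<lambda>t. f t * g t)"
    and g: "isCont g 0" "\<forall>t\<in>{-pi..pi}. g t \<le> M" and "g 0 < b"
  shows "eventually (\<lambda>n. qform (optpoly f n) (\<lambda>t. f t * g t) / sigma2 f n < b) sequentially"
proof -
  define b' where "b' = (g 0 + b) / 2"
  have "g 0 < b'" "b' < b"
    using \<open>g 0 < b\<close> by (auto simp: b'_def)
  obtain K where "0 \<le> K" and majorant: "\<And>t. t \<in> {-pi..pi} \<Longrightarrow> g t \<le> b' + K * (1 - cos t) / 2"
    using cos_majorant_exists[OF g(1) \<open>g 0 < b'\<close> g(2)] by blast
  have bound: "qform (optpoly f n) (\<lambda>t. f t * g t) / sigma2 f n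
      \<le> b' + K * (1 - sigma2 f (Suc n) / sigma2 f n)" for n
  proof -
    have "qform (optpoly f n) (\<lambda>t. f t * g t) / sigma2 f n
        \<le> (b' * sigma2 f n + K * (sigma2 f n - sigma2 f (Suc n))) / sigma2 f n"
      using qform_optpoly_le[OF f _ \<open>0 \<le> K\<close> majorant] fg sigma2_pos[OF f, of n]
      by (intro divide_right_mono) (auto simp: weight_def)
    also have "\<dots> = b' + K * (1 - sigma2 f (Suc n) / sigma2 f n)"
      using sigma2_pos[OF f, of n] by (simp add: field_simps)
    finally show ?thesis .
  qed
  have "(\<lambda>n. b' + K * (1 - sigma2 f (Suc n) / sigma2 f n)) \<longlonglongrightarrow> b' + K * (1 - 1)"
    by (intro tendsto_intros wv)
  then have "eventually (\<lambda>n. b' + K * (1 - sigma2 f (Suc n) / sigma2 f n) < b) sequentially"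
    using \<open>b' < b\<close> by (intro order_tendstoD(2)) auto
  then show ?thesis
    by (rule eventually_mono) (rule le_less_trans[OF bound])
qed

lemma eventually_sigma2_ratio_greater:
  assumes f: "weight f" "0 < (LINT t:{-pi..pi}|lborel. f t)"
    and wv: "(\<lambda>n. sigma2 f (Suc n) / sigma2 f n) \<longlonglongrightarrow> 1"
    and fg: "weight (\<lambda>t. f t * g t)"
    and "isCont g 0"
    and peak: "0 < g 0 \<Longrightarrow> \<exists>u K C. u \<in> Qn1 K \<and> (\<forall>t\<in>{-pi..pi}. circle_norm2 u t \<le> C * g t)"
    and "a < g 0"
  shows "eventually (\<lambda>n. a < sigma2 (\<lambda>t. f t * g t) n / sigma2 f n) sequentially"
proof (cases "a < 0")
  case True
  have "0 \<le> sigma2 (\<lambda>t. f t * g t) n / sigma2 f n" for n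
    using sigma2_nonneg[OF fg, of n] sigma2_pos[OF f, of n] by simp
  with True show ?thesis
    by (auto intro: always_eventually less_le_trans)
next
  case False
  define a' where "a' = (a + g 0) / 2"
  have "0 < a'" "a < a'" "a' < g 0"
    using False \<open>a < g 0\<close> by (auto simp: a'_def)
  then obtain u K C where "u \<in> Qn1 K" "\<forall>t\<in>{-pi..pi}. circle_norm2 u t \<le> C * g t"
    using peak by auto
  then obtain s L where s: "s \<in> Qn1 L" "\<And>t. t \<in> {-pi..pi} \<Longrightarrow> a' * circle_norm2 s t \<le> g t"
    using peaking_polynomial[OF \<open>isCont g 0\<close> \<open>0 < a'\<close> \<open>a' < g 0\<close>] by metis
  have bound: "a' * (sigma2 f (n + L) / sigma2 f n) \<le> sigma2 (\<lambda>t. f t * g t) n / sigma2 f n" for n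
    using sigma2_shift_le[OF f(1) _ s(1) _ s(2), of n] fg \<open>0 < a'\<close> sigma2_pos[OF f, of n]
    by (auto simp: weight_def divide_right_mono)
  have "(\<lambda>n. a' * (sigma2 f (n + L) / sigma2 f n)) \<longlonglongrightarrow> a' * 1"
    using sigma2_pos[OF f] less_imp_neq[THEN not_sym]
    by (intro tendsto_mult tendsto_const ratio_shift_tendsto[OF wv]) blast
  then have "eventually (\<lambda>n. a < a' * (sigma2 f (n + L) / sigma2 f n)) sequentially"
    using \<open>a < a'\<close> by (intro order_tendstoD(1)) auto
  then show ?thesis
    by (rule eventually_mono) (rule less_le_trans[OF _ bound])
qed

theorem sigma2_mult_ratio_tendsto:
  assumes f: "weight f" "0 < (LINT t:{-pi..pi}|lborel. f t)"
    and wv: "(\<lambda>n. sigma2 f (Suc n) / sigma2 f n) \<longlonglongrightarrow> 1"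
    and g_meas: "set_borel_measurable lborel {-pi..pi} g"
    and g_bounds: "\<forall>t\<in>{-pi..pi}. 0 \<le> g t \<and> g t \<le> M"
    and g_cont: "isCont g 0"
    and peak: "0 < g 0 \<Longrightarrow> \<exists>u K C. u \<in> Qn1 K \<and> (\<forall>t\<in>{-pi..pi}. circle_norm2 u t \<le> C * g t)"
  shows "(\<lambda>n. sigma2 (\<lambda>t. f t * g t) n / sigma2 f n) \<longlonglongrightarrow> g 0"
    and "(\<lambda>n. qform (optpoly f n) (\<lambda>t. f t * g t) / sigma2 f n) \<longlonglongrightarrow> g 0"
proof -
  have fg: "weight (\<lambda>t. f t * g t)"
    by (rule weight_mult[OF f(1) g_meas g_bounds])
  have le: "sigma2 (\<lambda>t. f t * g t) n / sigma2 f n \<le> qform (optpoly f n) (\<lambda>t. f t * g t) / sigma2 f n" for n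
    using sigma2_le_qform[OF fg optpoly_minimiser(1)[OF f]] sigma2_pos[OF f, of n]
    by (intro divide_right_mono) auto
  have upper: "eventually (\<lambda>n. qform (optpoly f n) (\<lambda>t. f t * g t) / sigma2 f n < b) sequentially"
    if "g 0 < b" for b
    using eventually_qform_optpoly_ratio_less[OF f wv fg g_cont _ that] g_bounds by blast
  have lower: "eventually (\<lambda>n. a < sigma2 (\<lambda>t. f t * g t) n / sigma2 f n) sequentially"
    if "a < g 0" for a
    by (rule eventually_sigma2_ratio_greater[OF f wv fg g_cont peak that])
  show "(\<lambda>n. sigma2 (\<lambda>t. f t * g t) n / sigma2 f n) \<longlonglongrightarrow> g 0"
  proof (rule order_tendstoI[OF lower])
    fix b assume "g 0 < b"
    from upper[OF this] show "eventually (\<lambda>n. sigma2 (\<lambda>t. f t * g t) n / sigma2 f n < b) sequentially"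
      by (rule eventually_mono) (rule le_less_trans[OF le])
  qed
  show "(\<lambda>n. qform (optpoly f n) (\<lambda>t. f t * g t) / sigma2 f n) \<longlonglongrightarrow> g 0"
  proof (rule order_tendstoI[OF _ upper])
    fix a assume "a < g 0"
    from lower[OF this] show "eventually (\<lambda>n. a < qform (optpoly f n) (\<lambda>t. f t * g t) / sigma2 f n) sequentially"
      by (rule eventually_mono) (rule less_le_trans[OF _ le])
  qed
qed

section \<open>Weights with algebraic zeros\<close>

definition root_weight :: "nat \<Rightarrow> (nat \<Rightarrow> real) \<Rightarrow> (nat \<Rightarrow> real) \<Rightarrow> real \<Rightarrow> real" where
  "root_weight r lam alpha t = (\<Prod>i<r. rpow \<bar>t - lam i\<bar> (alpha i))"

lemma root_weight_nonneg: "0 \<le> root_weight r lam alpha t"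
  by (simp add: root_weight_def prod_nonneg rpow_nonneg)

lemma continuous_on_root_weight:
  assumes "\<forall>i<r. 0 \<le> alpha i"
  shows "continuous_on UNIV (root_weight r lam alpha)"
proof -
  have "continuous_on UNIV (\<lambda>t. rpow \<bar>t - lam i\<bar> (alpha i))" if "i < r" for i
  proof (cases "alpha i = 0")
    case False
    with assms that have "0 < alpha i"
      by auto
    then show ?thesis
      by (simp add: rpow_def continuous_on_powr' continuous_intros)
  qed (simp add: rpow_def)
  then show ?thesis
    unfolding root_weight_def by (intro continuous_on_prod) auto
qed

lemma root_weight_bounded:
  assumes "\<forall>i<r. 0 \<le> alpha i"
  obtains B where "\<forall>t\<in>{-pi..pi}. root_weight r lam alpha t \<le> B"
proof -
  have "compact (root_weight r lam alpha ` {-pi..pi})"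
    by (intro compact_continuous_image continuous_on_subset[OF continuous_on_root_weight[OF assms]]) auto
  then have "bounded (root_weight r lam alpha ` {-pi..pi})"
    by (rule compact_imp_bounded)
  then obtain B where B: "\<forall>x \<in> root_weight r lam alpha ` {-pi..pi}. norm x \<le> B"
    unfolding bounded_iff by blast
  have "root_weight r lam alpha t \<le> B" if "t \<in> {-pi..pi}" for t
    using bspec[OF B imageI[OF that]] by (simp add: abs_le_iff)
  with that show ?thesis
    by blast
qed

definition root_poly :: "nat \<Rightarrow> (nat \<Rightarrow> real) \<Rightarrow> (nat \<Rightarrow> nat) \<Rightarrow> complex poly" where
  "root_poly r lam k = (\<Prod>i<r. [:- cis (lam i), 1:] ^ k i)"

lemma poly_root_poly: "poly (root_poly r lam k) z = (\<Prod>i<r. (z - cis (lam i)) ^ k i)"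
  by (simp add: root_poly_def poly_prod)

lemma degree_root_poly_le: "degree (root_poly r lam k) \<le> (\<Sum>i<r. k i)"
proof -
  have "degree (root_poly r lam k) \<le> (\<Sum>i<r. degree ([:- cis (lam i), 1:] ^ k i))"
    unfolding root_poly_def using degree_prod_sum_le[of "{..<r}"] by (simp add: comp_def)
  also have "\<dots> \<le> (\<Sum>i<r. k i)"
    by (intro sum_mono order.trans[OF degree_power_le]) simp
  finally show ?thesis .
qed

text \<open>A zero of order \<open>k\<close> with \<open>2k \<ge> \<alpha>\<close> at \<open>e\<^sup>i\<^sup>\<lambda>\<close> makes \<open>|q(e\<^sup>i\<^sup>t)|\<^sup>2\<close> vanish at least as fast as
  \<open>|t - \<lambda>|\<^sup>\<alpha>\<close>, because \<open>|e\<^sup>i\<^sup>t - e\<^sup>i\<^sup>\<lambda>| \<le> |t - \<lambda>|\<close>.\<close>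

lemma circle_norm2_root_poly_le:
  assumes "\<forall>i<r. lam i \<in> {-pi..pi}" "\<forall>i<r. 0 \<le> alpha i \<and> alpha i \<le> real (2 * k i)"
    and "t \<in> {-pi..pi}"
  shows "circle_norm2 (root_poly r lam k) t
    \<le> (\<Prod>i<r. (2 * pi) powr (real (2 * k i) - alpha i)) * root_weight r lam alpha t"
proof -
  have "circle_norm2 (root_poly r lam k) t = (\<Prod>i<r. cmod (cis t - cis (lam i)) ^ (2 * k i))"
    by (simp add: circle_norm2_def poly_root_poly prod_norm[symmetric] norm_power
        prod_power_distrib power_mult[symmetric] mult.commute)
  also have "\<dots> \<le> (\<Prod>i<r. (2 * pi) powr (real (2 * k i) - alpha i) * rpow \<bar>t - lam i\<bar> (alpha i))"
  proof (rule prod_mono)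
    fix i assume "i \<in> {..<r}"
    with assms have "\<bar>t - lam i\<bar> \<le> 2 * pi" "0 \<le> alpha i" "alpha i \<le> real (2 * k i)"
      by auto
    then show "0 \<le> cmod (cis t - cis (lam i)) ^ (2 * k i) \<and> cmod (cis t - cis (lam i)) ^ (2 * k i)
        \<le> (2 * pi) powr (real (2 * k i) - alpha i) * rpow \<bar>t - lam i\<bar> (alpha i)"
      using norm_cis_diff_power_le[of t "lam i" "alpha i" "2 * k i"] by simp
  qed
  also have "\<dots> = (\<Prod>i<r. (2 * pi) powr (real (2 * k i) - alpha i)) * root_weight r lam alpha t"
    by (simp add: root_weight_def prod.distrib)
  finally show ?thesis .
qed

lemma exists_Qn1_le_root_weight:
  assumes lam: "\<forall>i<r. lam i \<in> {-pi..pi}" and alpha: "\<forall>i<r. 0 \<le> alpha i"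
    and nonzero: "\<forall>i<r. 0 < alpha i \<longrightarrow> lam i \<noteq> 0"
  obtains u K C where "u \<in> Qn1 K" "0 < C"
    "\<And>t. t \<in> {-pi..pi} \<Longrightarrow> circle_norm2 u t \<le> C * root_weight r lam alpha t"
proof -
  define k where "k i = nat \<lceil>alpha i\<rceil>" for i
  define q where "q = root_poly r lam k"
  have "(1 - cis (lam i)) ^ k i \<noteq> 0" if "i < r" for i
    using nonzero lam cis_eq_1_iff[of "lam i"] that by (cases "k i = 0") (auto simp: k_def)
  then have "poly q 1 \<noteq> 0"
    by (simp add: q_def poly_root_poly)
  then have Qn1: "smult (inverse (poly q 1)) q \<in> Qn1 (\<Sum>i<r. k i)"
    using degree_root_poly_le[of r lam k] by (simp add: q_def Qn1_def)
  have "alpha i \<le> real (2 * k i)" if "i < r" for i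
  proof -
    have "0 \<le> alpha i"
      using alpha that by auto
    then have "real (2 * k i) = 2 * of_int \<lceil>alpha i\<rceil>"
      by (simp add: k_def)
    with le_of_int_ceiling[of "alpha i"] \<open>0 \<le> alpha i\<close> show ?thesis
      by linarith
  qed
  with alpha have k: "\<forall>i<r. 0 \<le> alpha i \<and> alpha i \<le> real (2 * k i)"
    by blast
  define D where "D = (\<Prod>i<r. (2 * pi) powr (real (2 * k i) - alpha i))"
  have bound: "circle_norm2 (smult (inverse (poly q 1)) q) t \<le> D / (cmod (poly q 1))^2 * root_weight r lam alpha t"
    if "t \<in> {-pi..pi}" for t
  proof -
    have "circle_norm2 (smult (inverse (poly q 1)) q) t = circle_norm2 q t / (cmod (poly q 1))^2"
      by (simp add: circle_norm2_smult norm_inverse power_inverse divide_inverse mult.commute)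
    with circle_norm2_root_poly_le[OF lam k that]
    show ?thesis
      by (simp add: q_def D_def divide_right_mono)
  qed
  have "0 < D / (cmod (poly q 1))^2"
    using \<open>poly q 1 \<noteq> 0\<close> by (simp add: D_def prod_pos)
  with Qn1 show ?thesis
    using bound by (rule that)
qed

lemma mult_root_weight_bounded:
  assumes "\<forall>i<r. 0 \<le> alpha i" and h: "\<forall>t\<in>{-pi..pi}. 0 \<le> h t \<and> h t \<le> M"
    and g: "\<forall>t\<in>{-pi..pi}. g t = h t * root_weight r lam alpha t"
  obtains B where "\<forall>t\<in>{-pi..pi}. 0 \<le> g t \<and> g t \<le> B"
proof -
  obtain B where B: "\<forall>t\<in>{-pi..pi}. root_weight r lam alpha t \<le> B"
    using root_weight_bounded[OF assms(1)] by blast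
  have "0 \<le> g t \<and> g t \<le> M * B" if "t \<in> {-pi..pi}" for t
  proof -
    have "0 \<le> h t" "h t \<le> M" "root_weight r lam alpha t \<le> B"
      using h B that by auto
    moreover have "h t * root_weight r lam alpha t \<le> M * B"
      using calculation root_weight_nonneg[of r lam alpha t] by (intro mult_mono) auto
    ultimately show ?thesis
      using g that root_weight_nonneg[of r lam alpha t] by simp
  qed
  with that show ?thesis
    by blast
qed

lemma set_borel_measurable_mult_root_weight:
  assumes "\<forall>i<r. 0 \<le> alpha i" and "set_borel_measurable lborel {-pi..pi} h"
    and g: "\<forall>t\<in>{-pi..pi}. g t = h t * root_weight r lam alpha t"
  shows "set_borel_measurable lborel {-pi..pi} g"
proof -
  have "set_borel_measurable lborel {-pi..pi} (root_weight r lam alpha)"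
    by (intro set_borel_measurable_lborel_continuous_on
        continuous_on_subset[OF continuous_on_root_weight[OF assms(1)]]) auto
  with assms(2) have "set_borel_measurable lborel {-pi..pi} (\<lambda>t. h t * root_weight r lam alpha t)"
    by (rule set_borel_measurable_mult)
  then show ?thesis
    using g by (subst set_borel_measurable_cong) auto
qed

lemma isCont_mult_root_weight:
  assumes "\<forall>i<r. 0 \<le> alpha i" and "isCont h 0"
    and g: "\<forall>t\<in>{-pi..pi}. g t = h t * root_weight r lam alpha t"
  shows "isCont g 0"
proof -
  have "eventually (\<lambda>t. t \<in> {-pi<..<pi}) (nhds 0)"
    by (intro eventually_nhds_in_open) auto
  then have near: "eventually (\<lambda>t. g t = h t * root_weight r lam alpha t) (nhds 0)"
    by eventually_elim (use g in auto)
  have "isCont (\<lambda>t. h t * root_weight r lam alpha t) 0"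
    using assms(2) continuous_on_root_weight[OF assms(1)]
    by (intro isCont_mult) (simp_all add: continuous_on_eq_continuous_at)
  then show ?thesis
    using isCont_cong[OF near] by simp
qed

lemma exists_Qn1_le_mult_root_weight:
  assumes lam: "\<forall>i<r. lam i \<in> {-pi..pi}" and alpha: "\<forall>i<r. 0 \<le> alpha i"
    and "0 < c" and h: "\<forall>t\<in>{-pi..pi}. c \<le> h t"
    and g: "\<forall>t\<in>{-pi..pi}. g t = h t * root_weight r lam alpha t" and "0 < g 0"
  shows "\<exists>u K C. u \<in> Qn1 K \<and> (\<forall>t\<in>{-pi..pi}. circle_norm2 u t \<le> C * g t)"
proof -
  have "root_weight r lam alpha 0 \<noteq> 0"
    using g \<open>0 < g 0\<close> by auto
  have "\<forall>i<r. 0 < alpha i \<longrightarrow> lam i \<noteq> 0"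
  proof (intro allI impI notI)
    fix i assume i: "i < r" "0 < alpha i" "lam i = 0"
    have "root_weight r lam alpha 0 = 0"
      unfolding root_weight_def by (rule prod_zero) (use i in \<open>auto simp: rpow_def intro!: bexI[of _ i]\<close>)
    with \<open>root_weight r lam alpha 0 \<noteq> 0\<close> show False
      by simp
  qed
  then obtain u K C where u: "u \<in> Qn1 K" "0 < C"
    and bound: "\<And>t. t \<in> {-pi..pi} \<Longrightarrow> circle_norm2 u t \<le> C * root_weight r lam alpha t"
    using exists_Qn1_le_root_weight[OF lam alpha] by blast
  have "circle_norm2 u t \<le> C / c * g t" if "t \<in> {-pi..pi}" for t
  proof -
    have "c * root_weight r lam alpha t \<le> h t * root_weight r lam alpha t"
      using h that root_weight_nonneg[of r lam alpha t] by (intro mult_right_mono) auto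
    then have "C / c * (c * root_weight r lam alpha t) \<le> C / c * g t"
      using g that \<open>0 < c\<close> \<open>0 < C\<close> by (intro mult_left_mono) auto
    with bound[OF that] \<open>0 < c\<close> show ?thesis
      by simp
  qed
  with u(1) show ?thesis
    by blast
qed

theorem theorem5p12:
  fixes f h g :: "real \<Rightarrow> real" and r :: nat and lam alpha :: "nat \<Rightarrow> real"
  assumes f_nonneg: "\<forall>t\<in>{-pi..pi}. f t \<ge> 0"
    and f_int: "set_integrable lborel {-pi..pi} f"
    and f_pos: "(LINT t:{-pi..pi}|lborel. f t) > 0"
    and weakly_varying: "(\<lambda>n. sigma2 f (Suc n) / sigma2 f n) \<longlonglongrightarrow> 1"
    and lam_range: "\<forall>i<r. lam i \<in> {-pi..pi}"
    and alpha_nonneg: "\<forall>i<r. alpha i \<ge> 0"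
    and h_meas: "set_borel_measurable lborel {-pi..pi} h"
    and h_bounded: "\<exists>M. \<forall>t\<in>{-pi..pi}. \<bar>h t\<bar> \<le> M"
    and h_cont: "isCont h 0"
    and h_lower: "\<exists>c>0. \<forall>t\<in>{-pi..pi}. h t \<ge> c"
    and g_def: "\<forall>t\<in>{-pi..pi}. g t = h t * (\<Prod>i<r. rpow \<bar>t - lam i\<bar> (alpha i))"
  shows "(\<lambda>n. sigma2 (\<lambda>t. f t * g t) n / sigma2 f n) \<longlonglongrightarrow> g 0
       \<and> (g 0 > 0 \<longrightarrow>
          (\<lambda>n. sigma2 (\<lambda>t. f t * g t) n / qform (optpoly f n) (\<lambda>t. f t * g t)) \<longlonglongrightarrow> 1)"
proof -
  have f: "weight f"
    using f_nonneg f_int by (simp add: weight_def)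
  have g_eq: "\<forall>t\<in>{-pi..pi}. g t = h t * root_weight r lam alpha t"
    using g_def by (simp add: root_weight_def)
  obtain c where "0 < c" and c: "\<forall>t\<in>{-pi..pi}. c \<le> h t"
    using h_lower by blast
  obtain M where "\<forall>t\<in>{-pi..pi}. \<bar>h t\<bar> \<le> M"
    using h_bounded by blast
  with c \<open>0 < c\<close> have "\<forall>t\<in>{-pi..pi}. 0 \<le> h t \<and> h t \<le> M"
    by (fastforce simp: abs_le_iff)
  then obtain B where g_bounds: "\<forall>t\<in>{-pi..pi}. 0 \<le> g t \<and> g t \<le> B"
    using mult_root_weight_bounded[OF alpha_nonneg _ g_eq] by blast
  note lim = sigma2_mult_ratio_tendsto[OF f f_pos weakly_varying
      set_borel_measurable_mult_root_weight[OF alpha_nonneg h_meas g_eq] g_bounds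
      isCont_mult_root_weight[OF alpha_nonneg h_cont g_eq]
      exists_Qn1_le_mult_root_weight[OF lam_range alpha_nonneg \<open>0 < c\<close> c g_eq]]
  have "(\<lambda>n. sigma2 (\<lambda>t. f t * g t) n / qform (optpoly f n) (\<lambda>t. f t * g t)) \<longlonglongrightarrow> 1"
    if "0 < g 0"
  proof -
    have "(\<lambda>n. (sigma2 (\<lambda>t. f t * g t) n / sigma2 f n)
        / (qform (optpoly f n) (\<lambda>t. f t * g t) / sigma2 f n)) \<longlonglongrightarrow> g 0 / g 0"
      using that by (intro tendsto_divide lim) auto
    then show ?thesis
      using that sigma2_pos[OF f f_pos] by (simp add: less_imp_neq[THEN not_sym])
  qed
  with lim(1) show ?thesis
    by blast
qed

end
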